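(* Let $\mathit{VI}$ be a finite set of variables with $\#\mathit{VI}=n$. For all $j,k\in\mathbb{N}$ with $1\le j<k\le n$, we have $\mathit{TSD}_j\subsetneq \mathit{TSD}_k$ (strict inclusion).
   Context: $\mathit{SG}=\wp(\mathit{VI})\setminus\{\emptyset\}$ (the set of sharing groups) and $\mathit{SH}=\wp(\mathit{SG})$, ordered by set inclusion. For $1\le k\le n$, the map $\rho_{\mathit{TSD}_k}:\mathit{SH}\to\mathit{SH}$ is $\rho_{\mathit{TSD}_k}(sh)=\{\,S\in\mathit{SG}\mid \forall T\subseteq S:\ \#T<k\implies S=\bigcup\{U\in sh\mid T\subseteq U\subseteq S\}\,\}$; it is an upper closure operator on $\mathit{SH}$, and $\mathit{TSD}_k=\rho_{\mathit{TSD}_k}(\mathit{SH})$ is its image (set of fixpoints). *)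

theory Defs
  imports Main
begin

definition SG :: "'v set \<Rightarrow> 'v set set" where
  "SG VI = Pow VI - {{}}"

definition SH :: "'v set \<Rightarrow> 'v set set set" where
  "SH VI = Pow (SG VI)"

definition rho_TSD :: "nat \<Rightarrow> 'v set \<Rightarrow> 'v set set \<Rightarrow> 'v set set" where
  "rho_TSD k VI sh =
     {S \<in> SG VI. \<forall>T. T \<subseteq> S \<longrightarrow> card T < k \<longrightarrow>
                    S = \<Union>{U \<in> sh. T \<subseteq> U \<and> U \<subseteq> S}}"

definition TSD :: "nat \<Rightarrow> 'v set \<Rightarrow> 'v set set set" where
  "TSD k VI = rho_TSD k VI ` SH VI"

end

theory Submission
  imports Defs
begin

text \<open>Since \<open>\<rho>\<^sub>k\<close> imposes the covering condition of \<open>\<rho>\<^sub>j\<close> for more sets \<open>T\<close>, both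
  are extensive and idempotent with \<open>\<rho>\<^sub>k \<le> \<rho>\<^sub>j\<close>, so every \<open>\<rho>\<^sub>j\<close>-fixpoint is a
  \<open>\<rho>\<^sub>k\<close>-fixpoint. For strictness let \<open>X\<close> consist of the nonempty proper subsets of a
  set \<open>A \<subseteq> VI\<close> of \<open>j + 1\<close> variables. Each \<open>T \<subseteq> A\<close> with \<open>#T < j\<close> is covered inside
  \<open>A\<close> by the sets \<open>T \<union> {x} \<in> X\<close>, so \<open>A \<in> \<rho>\<^sub>j(X) - X\<close>. For \<open>\<rho>\<^sub>k\<close> the test set
  \<open>T = A - {x}\<close> is admissible, and the members of \<open>X\<close> between \<open>T\<close> and \<open>A\<close> all miss
  \<open>x\<close>; hence \<open>\<rho>\<^sub>k(X) = X\<close>.\<close>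

lemma mem_rho_TSD_iff:
  "S \<in> rho_TSD k VI sh \<longleftrightarrow>
     S \<in> SG VI \<and> (\<forall>T\<subseteq>S. card T < k \<longrightarrow> (\<forall>x\<in>S. \<exists>U\<in>sh. T \<subseteq> U \<and> U \<subseteq> S \<and> x \<in> U))"
  unfolding rho_TSD_def by blast

lemma rho_TSD_coverD:
  assumes "S \<in> rho_TSD k VI sh" "T \<subseteq> S" "card T < k" "x \<in> S"
  obtains U where "U \<in> sh" "T \<subseteq> U" "U \<subseteq> S" "x \<in> U"
  using assms unfolding mem_rho_TSD_iff by blast

lemma rho_TSD_subset_SG: "rho_TSD k VI sh \<subseteq> SG VI"
  unfolding rho_TSD_def by auto

lemma rho_TSD_extensive: "sh \<subseteq> SG VI \<Longrightarrow> sh \<subseteq> rho_TSD k VI sh"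
  unfolding subset_iff mem_rho_TSD_iff by blast

lemma rho_TSD_antimono: "j \<le> k \<Longrightarrow> rho_TSD k VI sh \<subseteq> rho_TSD j VI sh"
  unfolding rho_TSD_def by auto

lemma rho_TSD_idem: "rho_TSD k VI (rho_TSD k VI sh) = rho_TSD k VI sh"
proof
  show "rho_TSD k VI sh \<subseteq> rho_TSD k VI (rho_TSD k VI sh)"
    by (rule rho_TSD_extensive[OF rho_TSD_subset_SG])
next
  show "rho_TSD k VI (rho_TSD k VI sh) \<subseteq> rho_TSD k VI sh"
  proof
    fix S assume S: "S \<in> rho_TSD k VI (rho_TSD k VI sh)"
    have "\<exists>V\<in>sh. T \<subseteq> V \<and> V \<subseteq> S \<and> x \<in> V"
      if T: "T \<subseteq> S" "card T < k" "x \<in> S" for T x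
    proof -
      obtain U where U: "U \<in> rho_TSD k VI sh" "T \<subseteq> U" "U \<subseteq> S" "x \<in> U"
        using rho_TSD_coverD[OF S T] .
      obtain V where "V \<in> sh" "T \<subseteq> V" "V \<subseteq> U" "x \<in> V"
        using rho_TSD_coverD[OF U(1,2) T(2) U(4)] .
      with \<open>U \<subseteq> S\<close> show ?thesis by blast
    qed
    moreover have "S \<in> SG VI"
      using S rho_TSD_subset_SG by blast
    ultimately show "S \<in> rho_TSD k VI sh"
      by (simp add: mem_rho_TSD_iff)
  qed
qed

lemma TSD_eq_fixpoints: "TSD k VI = {X. X \<subseteq> SG VI \<and> rho_TSD k VI X = X}"
proof
  show "TSD k VI \<subseteq> {X. X \<subseteq> SG VI \<and> rho_TSD k VI X = X}"
    unfolding TSD_def using rho_TSD_subset_SG rho_TSD_idem by blast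
  show "{X. X \<subseteq> SG VI \<and> rho_TSD k VI X = X} \<subseteq> TSD k VI"
    unfolding TSD_def SH_def by (auto intro!: image_eqI)
qed

lemma TSD_mono:
  assumes "j \<le> k" shows "TSD j VI \<subseteq> TSD k VI"
proof
  fix X assume "X \<in> TSD j VI"
  then have "X \<subseteq> SG VI" "rho_TSD j VI X = X"
    unfolding TSD_eq_fixpoints by auto
  then have "rho_TSD k VI X = X"
    using rho_TSD_antimono[OF assms] rho_TSD_extensive by (metis subset_antisym)
  with \<open>X \<subseteq> SG VI\<close> show "X \<in> TSD k VI"
    unfolding TSD_eq_fixpoints by auto
qed

lemma proper_subsets_in_TSD:
  assumes "finite A" "A \<subseteq> VI" "card A \<le> k" "0 < k"
  shows "Pow A - {{}, A} \<in> TSD k VI"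
proof -
  let ?X = "Pow A - {{}, A}"
  have X_SG: "?X \<subseteq> SG VI"
    using \<open>A \<subseteq> VI\<close> unfolding SG_def by auto
  have "S \<in> ?X" if S: "S \<in> rho_TSD k VI ?X" for S
  proof -
    have "S \<noteq> {}"
      using S rho_TSD_subset_SG unfolding SG_def by blast
    moreover have "S \<subseteq> A"
    proof
      fix x assume "x \<in> S"
      with rho_TSD_coverD[OF S empty_subsetI] \<open>0 < k\<close>
      show "x \<in> A" by auto
    qed
    moreover have "S \<noteq> A"
    proof
      assume "S = A"
      with \<open>S \<noteq> {}\<close> obtain x where "x \<in> A" by blast
      have "card (A - {x}) < k"
        using \<open>finite A\<close> \<open>x \<in> A\<close> \<open>card A \<le> k\<close> \<open>0 < k\<close> by (simp add: card_Diff_singleton)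
      then obtain U where "U \<in> ?X" "A - {x} \<subseteq> U" "U \<subseteq> A" "x \<in> U"
        using rho_TSD_coverD[of A k VI ?X "A - {x}" x] S \<open>S = A\<close> \<open>x \<in> A\<close> by blast
      then show False by blast
    qed
    ultimately show "S \<in> ?X" by blast
  qed
  then have "rho_TSD k VI ?X = ?X"
    using rho_TSD_extensive[OF X_SG] by blast
  with X_SG show ?thesis
    unfolding TSD_eq_fixpoints by blast
qed

lemma mem_rho_TSD_proper_subsets:
  assumes "A \<subseteq> VI" "j < card A"
  shows "A \<in> rho_TSD j VI (Pow A - {{}, A})"
proof -
  have "finite A" "A \<noteq> {}"
    using \<open>j < card A\<close> card.infinite by fastforce+
  have "\<exists>U\<in>Pow A - {{}, A}. T \<subseteq> U \<and> U \<subseteq> A \<and> x \<in> U"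
    if T: "T \<subseteq> A" "card T < j" "x \<in> A" for T x
  proof -
    have "finite T"
      using \<open>finite A\<close> \<open>T \<subseteq> A\<close> finite_subset by blast
    then have "card (insert x T) \<le> card T + 1"
      by (simp add: card_insert_if)
    with T(2) \<open>j < card A\<close> have "insert x T \<noteq> A" by auto
    with T show ?thesis by blast
  qed
  moreover have "A \<in> SG VI"
    using \<open>A \<subseteq> VI\<close> \<open>A \<noteq> {}\<close> unfolding SG_def by blast
  ultimately show ?thesis
    unfolding mem_rho_TSD_iff by blast
qed

theorem proposition3p10:
  fixes VI :: "'v set" and n j k :: nat
  assumes "finite VI" and "card VI = n"
    and "1 \<le> j" and "j < k" and "k \<le> n"
  shows "TSD j VI \<subset> TSD k VI"
proof -
  obtain A where A: "A \<subseteq> VI" "card A = Suc j"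
    using obtain_subset_with_card_n[of "Suc j" VI] assms by auto
  then have "finite A"
    using \<open>finite VI\<close> finite_subset by blast
  have "Pow A - {{}, A} \<in> TSD k VI"
    using proper_subsets_in_TSD[OF \<open>finite A\<close> \<open>A \<subseteq> VI\<close>] A \<open>j < k\<close> by simp
  moreover have "Pow A - {{}, A} \<notin> TSD j VI"
    using mem_rho_TSD_proper_subsets[of A VI j] A unfolding TSD_eq_fixpoints by auto
  ultimately show ?thesis
    using TSD_mono[of j k VI] \<open>j < k\<close> by auto
qed

end
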